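(* Let $L_4=(\partial^2+V(x))^2+U(x)\partial+W(x)$ with $U,V,W\in\mathbf{C}[x]$ be an irreducible operator of order $4$ in $A_1(\mathbf{C})$, and assume $\deg V>\max\{\tfrac12\deg U,\tfrac12\deg W\}$. Then every $M\in A_1(\mathbf{C})$ commuting with $L_4$ has even order.
   Context: $A_1(\mathbf{C})$ is the first Weyl algebra (operators with polynomial coefficients in $x$, $\partial=d/dx$, $[\partial,x]=1$). Irreducible means $L_4$ is not a product of two operators of positive order in $A_1(\mathbf{C})$. The degree of the zero polynomial is $-\infty$. *)

theory Defs
  imports "HOL-Computational_Algebra.Polynomial"
begin

text \<open>An operator sum_i p_i(x) d^i (coefficients on
the left, normal form) is represented as the polynomial in d with coefficients in
C[x], i.e. an element of type complex poly poly: coeff A i = p_i.\<close>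

type_synonym weyl = "complex poly poly"

text \<open>Multiplication via the Leibniz rule
  (p d^i)(q d^j) = sum_k (i choose k) p q^(k) d^(i+j-k).\<close>
definition weyl_mult :: "weyl \<Rightarrow> weyl \<Rightarrow> weyl" where
  "weyl_mult A B =
     (\<Sum>i\<le>degree A. \<Sum>j\<le>degree B. \<Sum>k\<le>i.
        monom (smult (of_nat (i choose k)) (coeff A i * (pderiv ^^ k) (coeff B j))) (i + j - k))"

definition weyl_D :: weyl where "weyl_D = monom 1 1"
definition weyl_poly :: "complex poly \<Rightarrow> weyl" where "weyl_poly p = [:p:]"

definition weyl_order :: "weyl \<Rightarrow> nat" where "weyl_order A = degree A"

definition weyl_irreducible :: "weyl \<Rightarrow> bool" where
  "weyl_irreducible L \<longleftrightarrow>
     \<not> (\<exists>A B. weyl_order A > 0 \<and> weyl_order B > 0 \<and> L = weyl_mult A B)"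

definition L4 :: "complex poly \<Rightarrow> complex poly \<Rightarrow> complex poly \<Rightarrow> weyl" where
  "L4 U V W =
     (let P = weyl_mult weyl_D weyl_D + weyl_poly V
      in weyl_mult P P + weyl_mult (weyl_poly U) weyl_D + weyl_poly W)"

end

theory Submission
  imports Defs "HOL-Computational_Algebra.Fundamental_Theorem_Algebra"
begin

text \<open>Give x the weight \<alpha> and d the weight \<beta>.  In LM - ML the top-weight terms come only
  from the first-order Leibniz terms, so the top weighted parts of commuting operators
  Poisson-commute.  Dehomogenised at x = 1 and combined with the Euler relation this becomes
  \<open>D\<^sub>M F' G = D\<^sub>L F G'\<close> for the top parts F of L and G of M, viewed as polynomials in d.
  Comparing degrees gives \<open>D\<^sub>M = \<beta> ord M\<close>, and comparing vanishing orders at a root r of F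
  gives \<open>ord M \<cdot> ord\<^sub>r F = 4 ord\<^sub>r G\<close>.  The degree hypothesis on V allows weights for which F
  is a quartic without cubic term that is not a monomial; such an F has no fourfold root, so
  \<open>ord\<^sub>r F \<in> {1,2,3}\<close> and ord M is even.  Irreducibility only serves to exclude constant V.\<close>

lemma degree_pCons_0_pderiv: "degree (pCons 0 (pderiv p)) = degree (p :: complex poly)"
proof (cases "degree p = 0")
  case False
  then have "pderiv p \<noteq> 0" by (simp add: pderiv_eq_0_iff)
  with False show ?thesis by (simp add: degree_pderiv)
qed (simp add: pderiv_eq_0_iff)

lemma coeff_pCons_0_pderiv: "coeff (pCons 0 (pderiv p)) n = of_nat n * coeff (p :: complex poly) n"
  by (cases n) (simp_all add: coeff_pderiv)

lemma pderiv_sum: "pderiv (\<Sum>x\<in>S. f x) = (\<Sum>x\<in>S. pderiv (f x))"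
  by (induction S rule: infinite_finite_induct) (auto simp: pderiv_add)

definition leibniz_term :: "nat \<Rightarrow> nat \<Rightarrow> weyl \<Rightarrow> weyl \<Rightarrow> weyl" where
  "leibniz_term N k A B = (\<Sum>i\<le>N. \<Sum>j\<le>N.
      monom (smult (of_nat (i choose k)) (coeff A i * (pderiv ^^ k) (coeff B j))) (i + j - k))"

lemma weyl_mult_eq_sum_leibniz_term:
  assumes "degree A \<le> N" "degree B \<le> N"
  shows "weyl_mult A B = (\<Sum>k\<le>N. leibniz_term N k A B)"
proof -
  define X where "X i j k =
    monom (smult (of_nat (i choose k)) (coeff A i * (pderiv ^^ k) (coeff B j))) (i + j - k)" for i j k
  have k_range: "(\<Sum>k\<le>i. X i j k) = (\<Sum>k\<le>N. X i j k)" if "i \<le> N" for i j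
    by (rule sum.mono_neutral_left) (use that in \<open>auto simp: X_def\<close>)
  have i_range: "(\<Sum>i\<le>degree A. \<Sum>j\<le>degree B. \<Sum>k\<le>N. X i j k) = (\<Sum>i\<le>N. \<Sum>j\<le>degree B. \<Sum>k\<le>N. X i j k)"
    by (rule sum.mono_neutral_left) (use assms in \<open>auto simp: X_def coeff_eq_0\<close>)
  have j_range: "(\<Sum>j\<le>degree B. \<Sum>k\<le>N. X i j k) = (\<Sum>j\<le>N. \<Sum>k\<le>N. X i j k)" for i
    by (rule sum.mono_neutral_left) (use assms in \<open>auto simp: X_def coeff_eq_0\<close>)
  have "weyl_mult A B = (\<Sum>i\<le>degree A. \<Sum>j\<le>degree B. \<Sum>k\<le>i. X i j k)"
    unfolding weyl_mult_def X_def by simp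
  also have "\<dots> = (\<Sum>i\<le>degree A. \<Sum>j\<le>degree B. \<Sum>k\<le>N. X i j k)"
    using assms by (intro sum.cong refl k_range) auto
  also have "\<dots> = (\<Sum>i\<le>N. \<Sum>j\<le>N. \<Sum>k\<le>N. X i j k)"
    using i_range j_range by simp
  also have "\<dots> = (\<Sum>k\<le>N. \<Sum>i\<le>N. \<Sum>j\<le>N. X i j k)"
    by (subst sum.swap) (subst (2) sum.swap, rule refl)
  finally show ?thesis unfolding leibniz_term_def X_def .
qed

definition weyl_coeff :: "weyl \<Rightarrow> nat \<Rightarrow> nat \<Rightarrow> complex" where
  "weyl_coeff A a i = coeff (coeff A i) a"

lemma weyl_coeff_eq_0: "degree A < i \<Longrightarrow> weyl_coeff A a i = 0"
  by (simp add: weyl_coeff_def coeff_eq_0)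

lemma weyl_coeff_sum: "weyl_coeff (\<Sum>x\<in>S. f x) a i = (\<Sum>x\<in>S. weyl_coeff (f x) a i)"
  by (induction S rule: infinite_finite_induct) (auto simp: weyl_coeff_def)

lemma weyl_coeff_monom_monom: "weyl_coeff (monom (monom c e) m) a i = (if i = m \<and> a = e then c else 0)"
  by (simp add: weyl_coeff_def)

definition weyl_bounded :: "nat \<Rightarrow> weyl \<Rightarrow> bool" where
  "weyl_bounded N A \<longleftrightarrow> degree A \<le> N \<and> (\<forall>i. degree (coeff A i) \<le> N)"

lemma weyl_bounded_mono: "weyl_bounded N A \<Longrightarrow> N \<le> N' \<Longrightarrow> weyl_bounded N' A"
  unfolding weyl_bounded_def by (meson order_trans)

lemma ex_weyl_bounded: "\<exists>N. weyl_bounded N A"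
proof
  define N where "N = degree A + (\<Sum>i\<le>degree A. degree (coeff A i))"
  have "degree (coeff A i) \<le> N" for i
  proof (cases "i \<le> degree A")
    case True
    then have "degree (coeff A i) \<le> (\<Sum>i\<le>degree A. degree (coeff A i))"
      by (intro member_le_sum) auto
    then show ?thesis unfolding N_def by linarith
  qed (simp add: coeff_eq_0)
  then show "weyl_bounded N A" unfolding weyl_bounded_def N_def by auto
qed

lemma weyl_coeff_nonzero_bounded: "weyl_bounded N A \<Longrightarrow> weyl_coeff A a i \<noteq> 0 \<Longrightarrow> a \<le> N \<and> i \<le> N"
  unfolding weyl_bounded_def weyl_coeff_def by (metis coeff_0 le_degree order.trans)

lemma weyl_expand:
  assumes "weyl_bounded N A"
  shows "A = (\<Sum>i\<le>N. \<Sum>a\<le>N. monom (monom (weyl_coeff A a i) a) i)"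
proof -
  have "A = (\<Sum>i\<le>N. monom (\<Sum>a\<le>N. monom (weyl_coeff A a i) a) i)"
    using assms by (simp add: weyl_bounded_def poly_as_sum_of_monoms' weyl_coeff_def)
  then show ?thesis by (simp add: monom_sum)
qed

lemma coeff_weyl_expand: "weyl_bounded N A \<Longrightarrow> coeff A i = (\<Sum>a\<le>N. monom (weyl_coeff A a i) a)"
  by (simp add: weyl_bounded_def poly_as_sum_of_monoms' weyl_coeff_def)

text \<open>The (\<alpha>,\<beta>)-weighted component of weight D of A: the monomials x^a d^i of A with
  \<alpha> a + \<beta> i = D, dehomogenised at x = 1 into a polynomial in d.  In the second variant
  each monomial is multiplied by its x-degree a, i.e. the Euler operator x d/dx is applied first.\<close>

definition weighted_part :: "nat \<Rightarrow> nat \<Rightarrow> nat \<Rightarrow> weyl \<Rightarrow> complex poly" where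
  "weighted_part \<alpha> \<beta> D A =
     (\<Sum>i\<le>degree A. monom (\<Sum>a\<le>D. if \<alpha>*a + \<beta>*i = D then weyl_coeff A a i else 0) i)"

definition weighted_part_euler :: "nat \<Rightarrow> nat \<Rightarrow> nat \<Rightarrow> weyl \<Rightarrow> complex poly" where
  "weighted_part_euler \<alpha> \<beta> D A =
     (\<Sum>i\<le>degree A. monom (\<Sum>a\<le>D. if \<alpha>*a + \<beta>*i = D then of_nat a * weyl_coeff A a i else 0) i)"

definition weighted_degree_le :: "nat \<Rightarrow> nat \<Rightarrow> nat \<Rightarrow> weyl \<Rightarrow> bool" where
  "weighted_degree_le \<alpha> \<beta> D A \<longleftrightarrow> (\<forall>a i. weyl_coeff A a i \<noteq> 0 \<longrightarrow> \<alpha>*a + \<beta>*i \<le> D)"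

lemma weighted_degree_leI:
  assumes "\<And>i. coeff A i \<noteq> 0 \<Longrightarrow> \<alpha> * degree (coeff A i) + \<beta> * i \<le> D"
  shows "weighted_degree_le \<alpha> \<beta> D A"
  unfolding weighted_degree_le_def
proof (intro allI impI)
  fix a i assume nz: "weyl_coeff A a i \<noteq> 0"
  then have "a \<le> degree (coeff A i)" and "coeff A i \<noteq> 0"
    unfolding weyl_coeff_def by (auto intro: le_degree)
  then show "\<alpha>*a + \<beta>*i \<le> D" using assms[of i] by (meson add_le_mono1 mult_le_mono2 order_trans)
qed

lemma sum_weight_line_unique:
  fixes f :: "nat \<Rightarrow> complex"
  assumes "\<alpha> > 0" "\<alpha>*a' + \<beta>*i = D"
  shows "(\<Sum>a\<le>D. if \<alpha>*a + \<beta>*i = D then f a else 0) = f a'"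
proof -
  have "a' \<le> \<alpha> * a'" using assms(1) by simp
  then have "a' \<le> D" using assms(2) by linarith
  have "(\<Sum>a\<le>D. if \<alpha>*a + \<beta>*i = D then f a else 0) = (\<Sum>a\<le>D. if a = a' then f a' else 0)"
    using assms by (intro sum.cong refl) auto
  also have "\<dots> = f a'" using \<open>a' \<le> D\<close> by simp
  finally show ?thesis .
qed

lemma coeff_weighted_part:
  "coeff (weighted_part \<alpha> \<beta> D A) i = (\<Sum>a\<le>D. if \<alpha>*a + \<beta>*i = D then weyl_coeff A a i else 0)"
proof (cases "i \<le> degree A")
  case False
  then have "\<And>a. weyl_coeff A a i = 0" by (simp add: weyl_coeff_eq_0)
  with False show ?thesis by (auto simp: weighted_part_def coeff_sum intro!: sum.neutral)
qed (simp add: weighted_part_def coeff_sum)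

lemma coeff_weighted_part_euler:
  "coeff (weighted_part_euler \<alpha> \<beta> D A) i =
     (\<Sum>a\<le>D. if \<alpha>*a + \<beta>*i = D then of_nat a * weyl_coeff A a i else 0)"
proof (cases "i \<le> degree A")
  case False
  then have "\<And>a. weyl_coeff A a i = 0" by (simp add: weyl_coeff_eq_0)
  with False show ?thesis by (auto simp: weighted_part_euler_def coeff_sum intro!: sum.neutral)
qed (simp add: weighted_part_euler_def coeff_sum)

lemma coeff_weighted_part_eq:
  "\<alpha> > 0 \<Longrightarrow> \<alpha>*a + \<beta>*i = D \<Longrightarrow> coeff (weighted_part \<alpha> \<beta> D A) i = weyl_coeff A a i"
  unfolding coeff_weighted_part by (rule sum_weight_line_unique)

lemma weighted_part_0 [simp]: "weighted_part \<alpha> \<beta> D 0 = 0"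
  unfolding weighted_part_def weyl_coeff_def by (simp cong: if_cong)

lemma degree_weighted_part_le: "degree (weighted_part \<alpha> \<beta> D A) \<le> degree A"
  by (rule degree_le) (auto simp: coeff_weighted_part weyl_coeff_eq_0 intro!: sum.neutral)

lemma if_sum_distrib: "(if P then sum g S else 0) = (\<Sum>x\<in>S. if P then g x else 0)"
  by simp

lemma weighted_part_sum: "weighted_part \<alpha> \<beta> D (\<Sum>x\<in>S. f x) = (\<Sum>x\<in>S. weighted_part \<alpha> \<beta> D (f x))"
  by (rule poly_eqI) (simp only: coeff_weighted_part coeff_sum weyl_coeff_sum if_sum_distrib, rule sum.swap)

lemma weighted_part_euler_sum:
  "weighted_part_euler \<alpha> \<beta> D (\<Sum>x\<in>S. f x) = (\<Sum>x\<in>S. weighted_part_euler \<alpha> \<beta> D (f x))"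
  by (rule poly_eqI)
    (simp only: coeff_weighted_part_euler coeff_sum weyl_coeff_sum if_sum_distrib sum_distrib_left, rule sum.swap)

lemma weighted_part_monom_monom:
  assumes "\<alpha> > 0"
  shows "weighted_part \<alpha> \<beta> D (monom (monom c e) m) = (if \<alpha>*e + \<beta>*m = D then monom c m else 0)"
proof (rule poly_eqI)
  fix i
  show "coeff (weighted_part \<alpha> \<beta> D (monom (monom c e) m)) i =
        coeff (if \<alpha>*e + \<beta>*m = D then monom c m else 0) i"
  proof (cases "i = m \<and> \<alpha>*e + \<beta>*m = D")
    case True
    then show ?thesis
      using coeff_weighted_part_eq[OF assms, of e \<beta> m D] by (simp add: weyl_coeff_monom_monom)
  qed (auto simp: coeff_weighted_part weyl_coeff_monom_monom intro!: sum.neutral)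
qed

lemma weighted_part_euler_monom_monom:
  assumes "\<alpha> > 0"
  shows "weighted_part_euler \<alpha> \<beta> D (monom (monom c e) m) =
           (if \<alpha>*e + \<beta>*m = D then monom (of_nat e * c) m else 0)"
proof (rule poly_eqI)
  fix i
  show "coeff (weighted_part_euler \<alpha> \<beta> D (monom (monom c e) m)) i =
        coeff (if \<alpha>*e + \<beta>*m = D then monom (of_nat e * c) m else 0) i"
  proof (cases "i = m \<and> \<alpha>*e + \<beta>*m = D")
    case True
    then show ?thesis
      using sum_weight_line_unique[OF assms, where a' = e and \<beta> = \<beta> and i = m and D = D
        and f = "\<lambda>a. of_nat a * weyl_coeff (monom (monom c e) m) a m"]
      by (simp add: coeff_weighted_part_euler weyl_coeff_monom_monom)
  qed (auto simp: coeff_weighted_part_euler weyl_coeff_monom_monom intro!: sum.neutral)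
qed

lemma weighted_part_expand:
  assumes "weyl_bounded N A" "\<alpha> > 0"
  shows "weighted_part \<alpha> \<beta> D A =
           (\<Sum>i\<le>N. \<Sum>a\<le>N. if \<alpha>*a + \<beta>*i = D then monom (weyl_coeff A a i) i else 0)"
  by (subst weyl_expand[OF assms(1)]) (simp add: weighted_part_sum weighted_part_monom_monom assms(2))

lemma weighted_part_euler_expand:
  assumes "weyl_bounded N A" "\<alpha> > 0"
  shows "weighted_part_euler \<alpha> \<beta> D A =
           (\<Sum>i\<le>N. \<Sum>a\<le>N. if \<alpha>*a + \<beta>*i = D then monom (of_nat a * weyl_coeff A a i) i else 0)"
  by (subst weyl_expand[OF assms(1)])
    (simp add: weighted_part_euler_sum weighted_part_euler_monom_monom assms(2))

lemma weighted_part_euler_identity: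
  "smult (of_nat \<alpha>) (weighted_part_euler \<alpha> \<beta> D A) =
     smult (of_nat D) (weighted_part \<alpha> \<beta> D A) - smult (of_nat \<beta>) (pCons 0 (pderiv (weighted_part \<alpha> \<beta> D A)))"
proof (rule poly_eqI)
  fix i
  have weight: "of_nat \<alpha> * (of_nat a * x) = of_nat D * x - of_nat \<beta> * (of_nat i * x)"
    if "\<alpha>*a + \<beta>*i = D" for a and x :: complex
  proof -
    have "(of_nat D :: complex) = of_nat \<alpha> * of_nat a + of_nat \<beta> * of_nat i"
      using that[symmetric] by simp
    then show ?thesis by (simp add: algebra_simps)
  qed
  have "coeff (smult (of_nat D) (weighted_part \<alpha> \<beta> D A) -
               smult (of_nat \<beta>) (pCons 0 (pderiv (weighted_part \<alpha> \<beta> D A)))) i =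
        of_nat D * coeff (weighted_part \<alpha> \<beta> D A) i - of_nat \<beta> * (of_nat i * coeff (weighted_part \<alpha> \<beta> D A) i)"
    by (simp only: coeff_diff coeff_smult coeff_pCons_0_pderiv)
  also have "\<dots> = (\<Sum>a\<le>D. if \<alpha>*a + \<beta>*i = D
                       then of_nat D * weyl_coeff A a i - of_nat \<beta> * (of_nat i * weyl_coeff A a i) else 0)"
    by (simp add: coeff_weighted_part sum_distrib_left flip: sum_subtractf, intro sum.cong) auto
  also have "\<dots> = (\<Sum>a\<le>D. of_nat \<alpha> * (if \<alpha>*a + \<beta>*i = D then of_nat a * weyl_coeff A a i else 0))"
    by (intro sum.cong refl) (simp add: weight)
  also have "\<dots> = coeff (smult (of_nat \<alpha>) (weighted_part_euler \<alpha> \<beta> D A)) i"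
    by (simp add: coeff_weighted_part_euler sum_distrib_left)
  finally show "coeff (smult (of_nat \<alpha>) (weighted_part_euler \<alpha> \<beta> D A)) i =
                coeff (smult (of_nat D) (weighted_part \<alpha> \<beta> D A) -
                       smult (of_nat \<beta>) (pCons 0 (pderiv (weighted_part \<alpha> \<beta> D A)))) i"
    by simp
qed

lemma higher_pderiv_monom:
  "(pderiv ^^ k) (monom (c::complex) b) =
     (if k \<le> b then monom (pochhammer (of_nat (b - k + 1)) k * c) (b - k) else 0)"
  by (rule poly_eqI) (auto simp: coeff_higher_pderiv Suc_diff_le)

lemma smult_sum_right: "smult c (\<Sum>x\<in>S. f x) = (\<Sum>x\<in>S. smult c (f x))"
  by (induction S rule: infinite_finite_induct) (auto simp: smult_add_right)

lemma leibniz_term_expand: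
  assumes "weyl_bounded N A" "weyl_bounded N B"
  shows "leibniz_term N k A B = (\<Sum>i\<le>N. \<Sum>j\<le>N. \<Sum>a\<le>N. \<Sum>b\<le>N. if k \<le> b then
     monom (monom (of_nat (i choose k) * weyl_coeff A a i *
       (pochhammer (of_nat (b - k + 1)) k * weyl_coeff B b j)) (a + (b - k))) (i + j - k) else 0)"
proof -
  have prod: "coeff A i * (pderiv ^^ k) (coeff B j) = (\<Sum>a\<le>N. \<Sum>b\<le>N. if k \<le> b then
      monom (weyl_coeff A a i * (pochhammer (of_nat (b - k + 1)) k * weyl_coeff B b j)) (a + (b - k)) else 0)"
    for i j
  proof -
    have "coeff A i * (pderiv ^^ k) (coeff B j) =
        (\<Sum>a\<le>N. \<Sum>b\<le>N. monom (weyl_coeff A a i) a * (pderiv ^^ k) (monom (weyl_coeff B b j) b))"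
      by (simp add: coeff_weyl_expand[OF assms(1)] coeff_weyl_expand[OF assms(2)] higher_pderiv_sum
          sum_distrib_left sum_distrib_right, rule sum.swap)
    then show ?thesis by (simp add: higher_pderiv_monom mult_monom if_distrib cong: if_cong)
  qed
  show ?thesis
    unfolding leibniz_term_def prod smult_sum_right monom_sum
    by (intro sum.cong refl) (simp add: smult_monom mult.assoc)
qed

lemma weighted_part_leibniz_term:
  assumes "weyl_bounded N A" "weyl_bounded N B" "\<alpha> > 0"
  shows "weighted_part \<alpha> \<beta> D (leibniz_term N k A B) =
    (\<Sum>i\<le>N. \<Sum>j\<le>N. \<Sum>a\<le>N. \<Sum>b\<le>N. if k \<le> b \<and> \<alpha>*(a + (b - k)) + \<beta>*(i + j - k) = D then
       monom (of_nat (i choose k) * weyl_coeff A a i *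
         (pochhammer (of_nat (b - k + 1)) k * weyl_coeff B b j)) (i + j - k) else 0)"
  unfolding leibniz_term_expand[OF assms(1,2)] weighted_part_sum using assms(3)
  by (intro sum.cong refl) (simp add: weighted_part_monom_monom)

lemma leibniz_term_0:
  assumes "weyl_bounded N A" "weyl_bounded N B"
  shows "leibniz_term N 0 A B = A * B"
proof -
  have "A * B = (\<Sum>i\<le>N. monom (coeff A i) i) * (\<Sum>j\<le>N. monom (coeff B j) j)"
    using assms by (simp add: weyl_bounded_def poly_as_sum_of_monoms')
  also have "\<dots> = (\<Sum>i\<le>N. \<Sum>j\<le>N. monom (coeff A i * coeff B j) (i + j))"
    unfolding sum_distrib_right unfolding sum_distrib_left by (simp add: mult_monom)
  finally show ?thesis unfolding leibniz_term_def by simp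
qed

text \<open>The k-th Leibniz term lowers the weight by k(\<alpha>+\<beta>).  Measured against
  D = DA + DB - \<alpha> - \<beta>, it falls below D for k \<ge> 2 and reaches D for k = 1 exactly on
  top-weight monomials of both factors.\<close>

lemma leibniz_weight_lt:
  fixes \<alpha> \<beta> :: nat
  assumes "\<alpha> > 0" "2 \<le> k" "k \<le> b" "k \<le> i" "\<alpha>*a + \<beta>*i \<le> DA" "\<alpha>*b + \<beta>*j \<le> DB"
    "D + \<alpha> + \<beta> = DA + DB"
  shows "\<alpha>*(a + (b - k)) + \<beta>*(i + j - k) \<noteq> D"
proof -
  obtain b' i' where b: "b = b' + k" and i: "i = i' + k"
    using assms(3,4) by (metis add.commute le_Suc_ex)
  have "\<alpha>*k \<ge> \<alpha>*2" "\<beta>*k \<ge> \<beta>*2" using assms(2) by simp_all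
  moreover have "\<alpha>*a + \<beta>*i' + \<beta>*k \<le> DA" using assms(5) by (simp add: i algebra_simps)
  moreover have "\<alpha>*b' + \<alpha>*k + \<beta>*j \<le> DB" using assms(6) by (simp add: b algebra_simps)
  moreover have "\<alpha>*(a + (b - k)) + \<beta>*(i + j - k) = \<alpha>*a + \<alpha>*b' + \<beta>*i' + \<beta>*j"
    by (simp add: b i algebra_simps)
  ultimately show ?thesis using assms(1,7) by linarith
qed

lemma leibniz_weight_eq_iff:
  fixes \<alpha> \<beta> :: nat
  assumes "1 \<le> b" "1 \<le> i" "\<alpha>*a + \<beta>*i \<le> DA" "\<alpha>*b + \<beta>*j \<le> DB" "D + \<alpha> + \<beta> = DA + DB"
  shows "\<alpha>*(a + (b - 1)) + \<beta>*(i + j - 1) = D \<longleftrightarrow> \<alpha>*a + \<beta>*i = DA \<and> \<alpha>*b + \<beta>*j = DB"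
proof -
  obtain b' i' where "b = b' + 1" "i = i' + 1"
    using assms(1,2) by (metis add.commute le_Suc_ex)
  then have "\<alpha>*(a + (b - 1)) + \<beta>*(i + j - 1) + \<alpha> + \<beta> = \<alpha>*a + \<beta>*i + (\<alpha>*b + \<beta>*j)"
    by (simp add: algebra_simps)
  then show ?thesis using assms(3-5) by linarith
qed

lemma weighted_part_leibniz_term_ge_2:
  assumes "weyl_bounded N A" "weyl_bounded N B" "\<alpha> > 0"
    "weighted_degree_le \<alpha> \<beta> DA A" "weighted_degree_le \<alpha> \<beta> DB B" "D + \<alpha> + \<beta> = DA + DB" "2 \<le> k"
  shows "weighted_part \<alpha> \<beta> D (leibniz_term N k A B) = 0"
  unfolding weighted_part_leibniz_term[OF assms(1-3)]
proof (intro sum.neutral ballI)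
  fix i j a b
  have "\<not> (k \<le> b \<and> \<alpha>*(a + (b - k)) + \<beta>*(i + j - k) = D \<and> k \<le> i \<and>
           weyl_coeff A a i \<noteq> 0 \<and> weyl_coeff B b j \<noteq> 0)"
    using leibniz_weight_lt[OF assms(3,7)] assms(4-6) unfolding weighted_degree_le_def by metis
  then show "(if k \<le> b \<and> \<alpha>*(a + (b - k)) + \<beta>*(i + j - k) = D then
     monom (of_nat (i choose k) * weyl_coeff A a i *
       (pochhammer (of_nat (b - k + 1)) k * weyl_coeff B b j)) (i + j - k) else 0) = 0"
    by auto
qed

lemma weighted_part_leibniz_term_1:
  assumes "weyl_bounded N A" "weyl_bounded N B" "\<alpha> > 0"
    "weighted_degree_le \<alpha> \<beta> DA A" "weighted_degree_le \<alpha> \<beta> DB B" "D + \<alpha> + \<beta> = DA + DB"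
  shows "weighted_part \<alpha> \<beta> D (leibniz_term N 1 A B) =
           pderiv (weighted_part \<alpha> \<beta> DA A) * weighted_part_euler \<alpha> \<beta> DB B"
proof -
  let ?c = "\<lambda>i a j b. of_nat i * weyl_coeff A a i * (of_nat b * weyl_coeff B b j)"
  have rhs: "pderiv (weighted_part \<alpha> \<beta> DA A) * weighted_part_euler \<alpha> \<beta> DB B =
     (\<Sum>i\<le>N. \<Sum>a\<le>N. \<Sum>j\<le>N. \<Sum>b\<le>N.
        if \<alpha>*a + \<beta>*i = DA \<and> \<alpha>*b + \<beta>*j = DB then monom (?c i a j b) (i - 1 + j) else 0)"
    unfolding weighted_part_expand[OF assms(1,3)] weighted_part_euler_expand[OF assms(2,3)] pderiv_sum
    unfolding sum_distrib_right unfolding sum_distrib_left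
    by (intro sum.cong refl) (simp add: pderiv_monom mult_monom)
  have lhs: "weighted_part \<alpha> \<beta> D (leibniz_term N 1 A B) =
     (\<Sum>i\<le>N. \<Sum>a\<le>N. \<Sum>j\<le>N. \<Sum>b\<le>N.
        if 1 \<le> b \<and> \<alpha>*(a + (b - 1)) + \<beta>*(i + j - 1) = D then monom (?c i a j b) (i + j - 1) else 0)"
    unfolding weighted_part_leibniz_term[OF assms(1-3)]
    by (rule sum.cong[OF refl], rule trans[OF sum.swap], intro sum.cong refl) (simp cong: if_cong)
  show ?thesis unfolding lhs rhs
  proof (intro sum.cong refl)
    fix i a j b
    show "(if 1 \<le> b \<and> \<alpha>*(a + (b - 1)) + \<beta>*(i + j - 1) = D then monom (?c i a j b) (i + j - 1) else 0) =
          (if \<alpha>*a + \<beta>*i = DA \<and> \<alpha>*b + \<beta>*j = DB then monom (?c i a j b) (i - 1 + j) else 0)"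
    proof (cases "1 \<le> b \<and> 1 \<le> i \<and> weyl_coeff A a i \<noteq> 0 \<and> weyl_coeff B b j \<noteq> 0")
      case True
      then show ?thesis
        using leibniz_weight_eq_iff[of b i \<alpha> a \<beta> DA j DB D] assms(4-6)
        unfolding weighted_degree_le_def by (simp add: add.commute)
    next
      case False
      then have "i = 0 \<or> b = 0 \<or> weyl_coeff A a i = 0 \<or> weyl_coeff B b j = 0" by auto
      then show ?thesis by auto
    qed
  qed
qed

lemma commuting_weighted_parts_bracket:
  assumes "\<alpha> > 0" "weighted_degree_le \<alpha> \<beta> DL L" "weighted_degree_le \<alpha> \<beta> DM M"
    "\<alpha> + \<beta> \<le> DL + DM" "weyl_mult L M = weyl_mult M L"
  shows "pderiv (weighted_part \<alpha> \<beta> DL L) * weighted_part_euler \<alpha> \<beta> DM M =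
         pderiv (weighted_part \<alpha> \<beta> DM M) * weighted_part_euler \<alpha> \<beta> DL L"
proof -
  obtain NL NM where "weyl_bounded NL L" "weyl_bounded NM M"
    using ex_weyl_bounded by blast
  define N' N where "N' = NL + NM" and "N = Suc (Suc N')"
  have bL: "weyl_bounded N L" and bM: "weyl_bounded N M"
    using \<open>weyl_bounded NL L\<close> \<open>weyl_bounded NM M\<close> by (auto simp: N_def N'_def elim!: weyl_bounded_mono)
  define D where "D = DL + DM - \<alpha> - \<beta>"
  have weights: "D + \<alpha> + \<beta> = DL + DM" "D + \<alpha> + \<beta> = DM + DL"
    using assms(4) by (auto simp: D_def)
  have top: "weighted_part \<alpha> \<beta> D (weyl_mult A B) =
               weighted_part \<alpha> \<beta> D (A * B) + pderiv (weighted_part \<alpha> \<beta> DA A) * weighted_part_euler \<alpha> \<beta> DB B"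
    if bA: "weyl_bounded N A" and bB: "weyl_bounded N B"
      and wd: "weighted_degree_le \<alpha> \<beta> DA A" "weighted_degree_le \<alpha> \<beta> DB B" "D + \<alpha> + \<beta> = DA + DB"
    for A B DA DB
  proof -
    have "degree A \<le> N" "degree B \<le> N" using bA bB by (auto simp: weyl_bounded_def)
    then have "weighted_part \<alpha> \<beta> D (weyl_mult A B) = (\<Sum>k\<le>N. weighted_part \<alpha> \<beta> D (leibniz_term N k A B))"
      by (simp add: weyl_mult_eq_sum_leibniz_term weighted_part_sum)
    also have "\<dots> = weighted_part \<alpha> \<beta> D (leibniz_term N 0 A B) + (weighted_part \<alpha> \<beta> D (leibniz_term N 1 A B) +
                      (\<Sum>k\<le>N'. weighted_part \<alpha> \<beta> D (leibniz_term N (Suc (Suc k)) A B)))"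
      unfolding N_def by (simp add: sum.atMost_Suc_shift del: sum.atMost_Suc)
    also have "(\<Sum>k\<le>N'. weighted_part \<alpha> \<beta> D (leibniz_term N (Suc (Suc k)) A B)) = 0"
      by (intro sum.neutral ballI weighted_part_leibniz_term_ge_2[OF bA bB assms(1) wd]) simp
    finally show ?thesis
      by (simp add: leibniz_term_0[OF bA bB] weighted_part_leibniz_term_1[OF bA bB assms(1) wd, unfolded One_nat_def])
  qed
  show ?thesis
    using top[OF bL bM assms(2,3) weights(1)] top[OF bM bL assms(3,2) weights(2)] assms(5)
    by (simp add: mult.commute)
qed

lemma commuting_weighted_parts:
  assumes "\<alpha> > 0" "weighted_degree_le \<alpha> \<beta> DL L" "weighted_degree_le \<alpha> \<beta> DM M"
    "\<alpha> + \<beta> \<le> DL + DM" "weyl_mult L M = weyl_mult M L"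
  shows "smult (of_nat DM) (pderiv (weighted_part \<alpha> \<beta> DL L) * weighted_part \<alpha> \<beta> DM M) =
         smult (of_nat DL) (weighted_part \<alpha> \<beta> DL L * pderiv (weighted_part \<alpha> \<beta> DM M))"
proof -
  define F G where "F = weighted_part \<alpha> \<beta> DL L" and "G = weighted_part \<alpha> \<beta> DM M"
  have "pderiv F * smult (of_nat \<alpha>) (weighted_part_euler \<alpha> \<beta> DM M) =
        pderiv G * smult (of_nat \<alpha>) (weighted_part_euler \<alpha> \<beta> DL L)"
    using commuting_weighted_parts_bracket[OF assms] unfolding F_def G_def by simp
  then have "pderiv F * (smult (of_nat DM) G - smult (of_nat \<beta>) (pCons 0 (pderiv G))) =
             pderiv G * (smult (of_nat DL) F - smult (of_nat \<beta>) (pCons 0 (pderiv F)))"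
    unfolding weighted_part_euler_identity F_def G_def .
  moreover have "pderiv F * pCons 0 (pderiv G) = pderiv G * pCons 0 (pderiv F)"
    by (simp add: mult.commute)
  ultimately show ?thesis
    unfolding F_def[symmetric] G_def[symmetric] by (simp add: algebra_simps)
qed

lemma degree_derivative_relation:
  fixes F G :: "complex poly"
  assumes rel: "smult c (pderiv F * G) = smult c' (F * pderiv G)" and "F \<noteq> 0" "G \<noteq> 0"
  shows "c * of_nat (degree F) = c' * of_nat (degree G)"
proof -
  define xD where "xD p = pCons 0 (pderiv p)" for p :: "complex poly"
  have top: "coeff (xD p * q) (degree p + degree q) = of_nat (degree p) * lead_coeff p * lead_coeff q" for p q
    using coeff_mult_degree_sum[of "xD p" q]
    unfolding xD_def degree_pCons_0_pderiv coeff_pCons_0_pderiv by simp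
  have "smult c (xD F * G) = smult c' (xD G * F)"
    using rel by (simp add: xD_def mult.commute)
  from arg_cong[OF this, of "\<lambda>p. coeff p (degree F + degree G)"]
  have "c * of_nat (degree F) * (lead_coeff F * lead_coeff G) =
        c' * of_nat (degree G) * (lead_coeff F * lead_coeff G)"
    using top[of F G] top[of G F] by (simp add: algebra_simps)
  then show ?thesis using assms(2,3) by simp
qed

lemma linear_mult_pderiv_power:
  "[:-r, 1:] * pderiv ([:-r, 1:] ^ e) = smult (of_nat e) ([:-r, 1:] ^ e :: complex poly)"
proof (cases e)
  case (Suc n)
  have "pderiv [:-r, 1:] = (1 :: complex poly)" by (simp add: pderiv_pCons)
  then show ?thesis unfolding Suc pderiv_power_Suc
    by (simp only: mult_1_right mult_smult_right power_Suc)
qed simp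

lemma order_derivative_relation:
  fixes F G :: "complex poly"
  assumes rel: "smult c (pderiv F * G) = smult c' (F * pderiv G)" and "F \<noteq> 0" "G \<noteq> 0"
  shows "c * of_nat (order r F) = c' * of_nat (order r G)"
proof -
  define q e f where "q = [:-r, 1:]" and "e = order r F" and "f = order r G"
  obtain A where A: "F = q^e * A" "\<not> q dvd A"
    using order_decomp[OF assms(2)] unfolding q_def e_def by blast
  obtain B where B: "G = q^f * B" "\<not> q dvd B"
    using order_decomp[OF assms(3)] unfolding q_def f_def by blast
  have qF: "q * pderiv F = q^e * (q * pderiv A + smult (of_nat e) A)"
    unfolding A(1) pderiv_mult by (simp add: algebra_simps linear_mult_pderiv_power[of r e, folded q_def])
  have qG: "q * pderiv G = q^f * (q * pderiv B + smult (of_nat f) B)"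
    unfolding B(1) pderiv_mult by (simp add: algebra_simps linear_mult_pderiv_power[of r f, folded q_def])
  have "smult c ((q * pderiv F) * G) = smult c' (F * (q * pderiv G))"
    using arg_cong[OF rel, of "\<lambda>x. q * x"] by (simp add: algebra_simps)
  then have "q^(e+f) * (smult c ((q * pderiv A + smult (of_nat e) A) * B) -
                        smult c' (A * (q * pderiv B + smult (of_nat f) B))) = 0"
    unfolding qF qG by (subst (asm) A(1), subst (asm) B(1)) (simp add: algebra_simps power_add)
  moreover have "q^(e+f) \<noteq> 0" by (simp add: q_def)
  ultimately have "smult c ((q * pderiv A + smult (of_nat e) A) * B) =
                   smult c' (A * (q * pderiv B + smult (of_nat f) B))"
    by (metis mult_eq_0_iff eq_iff_diff_eq_0)
  from arg_cong[OF this, of "\<lambda>p. poly p r"]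
  have "(c * of_nat e) * (poly A r * poly B r) = (c' * of_nat f) * (poly A r * poly B r)"
    by (simp add: q_def algebra_simps)
  moreover have "poly A r \<noteq> 0" "poly B r \<noteq> 0"
    using A(2) B(2) unfolding q_def by (simp_all add: poly_eq_0_iff_dvd)
  ultimately show ?thesis unfolding e_def f_def by simp
qed

lemma linear_power_4: "([:-r, 1:] ^ 4 :: complex poly) = [:r^4, -4*r^3, 6*r^2, -4*r, 1:]"
  by (simp add: numeral_eq_Suc algebra_simps)

lemma fourfold_root_of_depressed_quartic:
  fixes F :: "complex poly"
  assumes "degree F = 4" "coeff F 3 = 0" "order r F = 4"
  shows "F = monom (lead_coeff F) 4"
proof -
  have F0: "F \<noteq> 0" using assms(1) by auto
  obtain A where A: "F = [:-r, 1:]^4 * A"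
    using order_decomp[OF F0, of r] assms(3) by auto
  with F0 have "degree F = 4 + degree A" by (auto simp: degree_mult_eq degree_power_eq)
  then obtain c where "A = [:c:]" using assms(1) by (metis add_cancel_right_right degree_eq_zeroE)
  then have F: "F = [:c*r^4, -4*c*r^3, 6*c*r^2, -4*c*r, c:]"
    using A by (simp add: linear_power_4 algebra_simps)
  then have "c \<noteq> 0" using F0 by auto
  moreover have "-4*c*r = 0" using assms(2) F by (simp add: numeral_eq_Suc)
  ultimately have "r = 0" by simp
  then show ?thesis using F by (auto intro!: poly_eqI simp: numeral_eq_Suc coeff_pCons split: nat.split)
qed

lemma weighted_degree_attained:
  assumes "M \<noteq> 0" "\<alpha> > 0"
  obtains D where "weighted_degree_le \<alpha> \<beta> D M" "weighted_part \<alpha> \<beta> D M \<noteq> 0" "\<beta> * degree M \<le> D"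
proof -
  obtain N where bM: "weyl_bounded N M" using ex_weyl_bounded by blast
  define S where "S = {(a, i). weyl_coeff M a i \<noteq> 0}"
  define wt where "wt = (\<lambda>(a, i). \<alpha>*a + \<beta>*i)"
  define D where "D = Max (wt ` S)"
  have "finite S"
    by (rule finite_subset[of _ "{..N} \<times> {..N}"]) (auto simp: S_def dest: weyl_coeff_nonzero_bounded[OF bM])
  have "lead_coeff M \<noteq> 0" using assms(1) by simp
  then obtain a where "weyl_coeff M a (degree M) \<noteq> 0"
    unfolding weyl_coeff_def by (metis coeff_0 poly_eqI)
  then have "(a, degree M) \<in> S" by (simp add: S_def)
  then have "D \<in> wt ` S" unfolding D_def using \<open>finite S\<close> by (intro Max_in) auto
  then obtain a0 i0 where "weyl_coeff M a0 i0 \<noteq> 0" "\<alpha>*a0 + \<beta>*i0 = D"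
    by (auto simp: S_def wt_def)
  then have "weighted_part \<alpha> \<beta> D M \<noteq> 0"
    using coeff_weighted_part_eq[OF assms(2)] by (metis coeff_0)
  moreover have wdM: "weighted_degree_le \<alpha> \<beta> D M"
    unfolding weighted_degree_le_def D_def using \<open>finite S\<close>
    by (auto simp: S_def wt_def intro!: Max_ge)
  moreover have "\<beta> * degree M \<le> D"
    using wdM \<open>weyl_coeff M a (degree M) \<noteq> 0\<close> unfolding weighted_degree_le_def by fastforce
  ultimately show ?thesis using that by blast
qed

lemma commutant_even_order:
  fixes \<alpha> \<beta> :: nat and L M :: weyl
  defines "F \<equiv> weighted_part \<alpha> \<beta> (4*\<beta>) L"
  assumes "\<alpha> > 0" "\<beta> > 0" "\<alpha> \<le> 3*\<beta>" "weighted_degree_le \<alpha> \<beta> (4*\<beta>) L"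
    and "degree F = 4" "coeff F 3 = 0" "F \<noteq> monom (lead_coeff F) 4"
    and "M \<noteq> 0" "weyl_mult M L = weyl_mult L M"
  shows "even (degree M)"
proof -
  obtain D where wdM: "weighted_degree_le \<alpha> \<beta> D M" and G0: "weighted_part \<alpha> \<beta> D M \<noteq> 0"
    and lowerD: "\<beta> * degree M \<le> D"
    using weighted_degree_attained[OF assms(9,2)] .
  define G where "G = weighted_part \<alpha> \<beta> D M"
  have F0: "F \<noteq> 0" using assms(6) by auto
  have rel: "smult (of_nat D) (pderiv F * G) = smult (of_nat (4*\<beta>)) (F * pderiv G)"
    unfolding F_def G_def
    by (rule commuting_weighted_parts) (use assms(2-5,10) wdM in auto)
  have "of_nat (D * 4) = (of_nat (4 * \<beta> * degree G) :: complex)"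
    using degree_derivative_relation[OF rel F0 G0[folded G_def]] assms(6) by simp
  then have "D = \<beta> * degree G" unfolding of_nat_eq_iff by simp
  with lowerD assms(3) have "degree M \<le> degree G" by simp
  moreover have "degree G \<le> degree M" unfolding G_def by (rule degree_weighted_part_le)
  ultimately have D: "D = \<beta> * degree M" using \<open>D = \<beta> * degree G\<close> by simp
  obtain r where "poly F r = 0"
    using fundamental_theorem_of_algebra_alt[of F] assms(6) by fastforce
  then have "order r F \<noteq> 0" using F0 order_root by blast
  moreover have "order r F \<le> 4" using order_degree[OF F0] assms(6) by simp
  moreover have "order r F \<noteq> 4"
    using fourfold_root_of_depressed_quartic assms(6-8) by blast
  ultimately have "order r F = 1 \<or> order r F = 2 \<or> order r F = 3" by linarith
  moreover have "of_nat (D * order r F) = (of_nat (4 * \<beta> * order r G) :: complex)"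
    using order_derivative_relation[OF rel F0 G0[folded G_def]] by simp
  then have "degree M * order r F = 4 * order r G"
    unfolding of_nat_eq_iff D using assms(3) by simp
  ultimately show ?thesis by (elim disjE) (simp_all, presburger+)
qed

lemma weighted_part_quartic:
  fixes \<alpha> \<beta> :: nat and L :: weyl
  defines "F \<equiv> weighted_part \<alpha> \<beta> (4*\<beta>) L"
  assumes "\<alpha> > 0" "degree L = 4" "coeff L 4 = 1" "coeff L 3 = 0"
    and "j < 4" "\<alpha>*a + \<beta>*j = 4*\<beta>" "weyl_coeff L a j \<noteq> 0"
  shows "degree F = 4" "coeff F 3 = 0" "F \<noteq> monom (lead_coeff F) 4"
proof -
  have "coeff F 4 = 1"
    unfolding F_def using coeff_weighted_part_eq[OF assms(2), of 0 \<beta> 4] by (simp add: weyl_coeff_def assms(4))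
  moreover have "degree F \<le> 4" unfolding F_def using degree_weighted_part_le assms(3) by metis
  ultimately show "degree F = 4" by (metis le_antisym le_degree one_neq_zero)
  have "weyl_coeff L a 3 = 0" for a by (simp add: weyl_coeff_def assms(5))
  then show "coeff F 3 = 0" unfolding F_def coeff_weighted_part by (simp cong: if_cong)
  have "coeff F j \<noteq> 0" unfolding F_def using coeff_weighted_part_eq assms(2,7,8) by simp
  moreover have "coeff (monom c 4) j = 0" for c :: complex using assms(6) by simp
  ultimately show "F \<noteq> monom (lead_coeff F) 4" by metis
qed

lemma weyl_mult_D_D: "weyl_mult weyl_D weyl_D = monom 1 2"
  unfolding weyl_mult_def weyl_D_def by (simp add: degree_monom_eq numeral_2_eq_2)

lemma weyl_mult_poly_D: "weyl_mult (weyl_poly U) weyl_D = monom U 1"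
  unfolding weyl_mult_def weyl_D_def weyl_poly_def by (simp add: degree_monom_eq)

lemma degree_D2_plus_poly: "degree (monom 1 2 + [:V:] :: weyl) = 2"
  by (simp add: degree_add_eq_left degree_monom_eq)

lemma weyl_square_D2_plus_poly:
  "weyl_mult (monom 1 2 + [:V:]) (monom 1 2 + [:V:]) =
     monom 1 4 + monom (smult 2 V) 2 + monom (smult 2 (pderiv V)) 1 + [:pderiv (pderiv V) + V * V:]"
proof -
  have two: "(2::weyl) * monom p n = monom (smult 2 p) n" for p n
    by (metis mult_2 add_monom one_add_one smult_1_left smult_add_left)
  show ?thesis
    unfolding weyl_mult_def degree_D2_plus_poly
    apply (simp add: numeral_2_eq_2)
    apply (simp add: monom_0 one_pCons[symmetric] smult_monom[symmetric] numeral_eq_Suc)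
    apply (simp add: monom_0 add_monom[symmetric] add_monom algebra_simps two flip: smult_monom)
    done
qed

lemma L4_normal_form:
  "L4 U V W = monom 1 4 + monom (smult 2 V) 2 + monom (smult 2 (pderiv V) + U) 1 +
                [:pderiv (pderiv V) + V * V + W:]"
  unfolding L4_def Let_def weyl_mult_D_D weyl_mult_poly_D
  unfolding weyl_poly_def weyl_square_D2_plus_poly
  by (simp add: add_monom[symmetric] algebra_simps)

lemma coeff_L4:
  "coeff (L4 U V W) i =
     (if i = 4 then 1 else if i = 2 then smult 2 V else if i = 1 then smult 2 (pderiv V) + U
      else if i = 0 then pderiv (pderiv V) + V * V + W else 0)"
  unfolding L4_normal_form by (cases i) simp_all

lemma L4_reducible_if_constant:
  assumes "degree V = 0"
  shows "\<not> weyl_irreducible (L4 0 V 0)"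
proof -
  define P where "P = weyl_mult weyl_D weyl_D + weyl_poly V"
  have "L4 0 V 0 = weyl_mult P P"
    unfolding L4_def P_def Let_def weyl_mult_poly_D by (simp add: weyl_poly_def)
  moreover have "weyl_order P = 2"
    unfolding P_def weyl_order_def weyl_mult_D_D weyl_poly_def by (rule degree_D2_plus_poly)
  ultimately show ?thesis unfolding weyl_irreducible_def by (metis zero_less_numeral)
qed

text \<open>With weights (2, deg V) the monomials \<open>d^4\<close> and the leading term of \<open>V^2\<close> reach the top
  weight 4 deg V, unless the d-coefficient \<open>2V' + U\<close> has degree e > 3/2 deg V; then the weights
  (3, e) give \<open>d^4\<close> and the leading term of \<open>(2V' + U) d\<close> the top weight 4e.\<close>

lemma L4_weighting:
  fixes U V W :: "complex poly"
  defines "L \<equiv> L4 U V W"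
  assumes "1 \<le> degree V" "U \<noteq> 0 \<Longrightarrow> degree U < 2 * degree V" "W \<noteq> 0 \<Longrightarrow> degree W < 2 * degree V"
  obtains \<alpha> \<beta> a j where "\<alpha> > 0" "\<beta> > 0" "\<alpha> \<le> 3*\<beta>" "weighted_degree_le \<alpha> \<beta> (4*\<beta>) L"
    "j < 4" "\<alpha>*a + \<beta>*j = 4*\<beta>" "weyl_coeff L a j \<noteq> 0"
proof -
  define n where "n = degree V"
  define L1 L0 where "L1 = smult 2 (pderiv V) + U" and "L0 = pderiv (pderiv V) + V * V + W"
  have cL: "coeff L i = (if i = 4 then 1 else if i = 2 then smult 2 V else if i = 1 then L1
                         else if i = 0 then L0 else 0)" for i
    unfolding L_def L1_def L0_def by (rule coeff_L4)
  have "V \<noteq> 0" using assms(2) by auto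
  then have "degree (pderiv (pderiv V)) < 2*n" "degree (V * V) = 2*n"
    using assms(2) by (simp_all add: n_def degree_pderiv degree_mult_eq)
  moreover have "W = 0 \<or> degree W < 2*n" using assms(4) by (auto simp: n_def)
  ultimately have dL0: "degree L0 \<le> 2*n" and cL0: "coeff L0 (2*n) = lead_coeff V * lead_coeff V"
    by (auto simp: L0_def n_def coeff_eq_0 degree_add_le coeff_mult_degree_sum[of V V, folded mult_2])
  have support: "i = 4 \<or> i = 2 \<or> i = 1 \<or> i = 0" if "coeff L i \<noteq> 0" for i
    using that by (simp add: cL split: if_splits)
  have dV2: "degree (smult 2 V) = n" by (simp add: n_def)
  show ?thesis
  proof (cases "L1 = 0 \<or> 2 * degree L1 \<le> 3*n")
    case True
    have "weighted_degree_le 2 n (4*n) L"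
    proof (rule weighted_degree_leI)
      fix i assume "coeff L i \<noteq> 0"
      with support[OF this] show "2 * degree (coeff L i) + n * i \<le> 4*n"
        using True dL0 dV2 by (elim disjE) (simp_all add: cL)
    qed
    moreover have "weyl_coeff L (2*n) 0 \<noteq> 0" using cL0 \<open>V \<noteq> 0\<close> by (simp add: cL weyl_coeff_def)
    ultimately show ?thesis using that[of 2 n 0 "2*n"] assms(2) unfolding n_def by simp
  next
    case False
    define e where "e = degree L1"
    have "3*n < 2*e" "L1 \<noteq> 0" using False by (auto simp: e_def)
    have "weighted_degree_le 3 e (4*e) L"
    proof (rule weighted_degree_leI)
      fix i assume "coeff L i \<noteq> 0"
      with support[OF this] show "3 * degree (coeff L i) + e * i \<le> 4*e"
        using \<open>3*n < 2*e\<close> dL0 dV2 by (elim disjE) (simp_all add: cL e_def)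
    qed
    moreover have "weyl_coeff L e 1 \<noteq> 0" using \<open>L1 \<noteq> 0\<close> by (simp add: cL weyl_coeff_def e_def)
    ultimately show ?thesis using that[of 3 e 1 e] \<open>3*n < 2*e\<close> by simp
  qed
qed

theorem mainTheorem7:
  fixes U V W :: "complex poly"
  assumes "weyl_order (L4 U V W) = 4"
    and "weyl_irreducible (L4 U V W)"
    and "U \<noteq> 0 \<Longrightarrow> 2 * degree V > degree U"
    and "W \<noteq> 0 \<Longrightarrow> 2 * degree V > degree W"
  shows "\<forall>M :: weyl. M \<noteq> 0 \<longrightarrow> weyl_mult M (L4 U V W) = weyl_mult (L4 U V W) M
           \<longrightarrow> even (weyl_order M)"
proof (intro allI impI)
  fix M :: weyl
  assume M: "M \<noteq> 0" "weyl_mult M (L4 U V W) = weyl_mult (L4 U V W) M"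
  have "1 \<le> degree V"
  proof (rule ccontr)
    assume "\<not> 1 \<le> degree V"
    then have "degree V = 0" "U = 0" "W = 0" using assms(3,4) by auto
    then show False using assms(2) L4_reducible_if_constant by blast
  qed
  then obtain \<alpha> \<beta> a j where weights: "\<alpha> > 0" "\<beta> > 0" "\<alpha> \<le> 3*\<beta>"
      "weighted_degree_le \<alpha> \<beta> (4*\<beta>) (L4 U V W)"
    and top: "j < 4" "\<alpha>*a + \<beta>*j = 4*\<beta>" "weyl_coeff (L4 U V W) a j \<noteq> 0"
    by (rule L4_weighting[OF _ assms(3,4)])
  have "degree (L4 U V W) = 4" using assms(1) by (simp add: weyl_order_def)
  moreover have "coeff (L4 U V W) 4 = 1" "coeff (L4 U V W) 3 = 0" by (simp_all add: coeff_L4)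
  ultimately have quartic: "degree (weighted_part \<alpha> \<beta> (4*\<beta>) (L4 U V W)) = 4"
      "coeff (weighted_part \<alpha> \<beta> (4*\<beta>) (L4 U V W)) 3 = 0"
      "weighted_part \<alpha> \<beta> (4*\<beta>) (L4 U V W) \<noteq> monom (lead_coeff (weighted_part \<alpha> \<beta> (4*\<beta>) (L4 U V W))) 4"
    using weighted_part_quartic[OF weights(1) _ _ _ top] by blast+
  show "even (weyl_order M)"
    unfolding weyl_order_def by (rule commutant_even_order[OF weights quartic M])
qed

end
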